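(* Let $n\in\mathbb{N}$, $A_n=\{(i,j)\in\mathbb{Z}^2:0\le i,j\le 14n\}$ and $\tau:\mathbb{R}^2\to\mathbb{R}^2$, $\tau(x,y)=(x,(28n)^y)$. Let $(a_1,b_1),(a_2,b_2),(a_3,b_3)\in A_n$ with $a_1<a_2<a_3$ and either $b_1<b_2<b_3$ or $b_3<b_2<b_1$. Then the point $\tau(a_2,b_2)$ lies strictly below the line segment between $\tau(a_1,b_1)$ and $\tau(a_3,b_3)$ (i.e., below the point of that segment with $x$-coordinate $a_2$). *)

theory Defs
  imports Complex_Main
begin

definition A :: "nat \<Rightarrow> (int \<times> int) set" where
  "A n = {(i, j). 0 \<le> i \<and> i \<le> 14 * int n \<and> 0 \<le> j \<and> j \<le> 14 * int n}"

definition tau :: "nat \<Rightarrow> real \<times> real \<Rightarrow> real \<times> real" where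
  "tau n p = (fst p, (28 * real n) powr (snd p))"

definition line_at :: "real \<times> real \<Rightarrow> real \<times> real \<Rightarrow> real \<Rightarrow> real" where
  "line_at P Q x = snd P + (x - fst P) / (fst Q - fst P) * (snd Q - snd P)"

end

theory Submission
  imports Defs
begin

text \<open>
  With \<open>N = 28n\<close>, the heights \<open>N powr b\<close> of consecutive rows differ by a factor of at
  least \<open>N\<close>, so the middle point lies at least a factor \<open>N\<close> below one of the two
  outer points. The chord at \<open>a\<^sub>2\<close> is a convex combination of the outer heights whose
  weights are at least \<open>1/(a\<^sub>3 - a\<^sub>1) \<ge> 1/(14n)\<close>, hence it exceeds \<open>N/(14n) = 2\<close> times
  the middle height.
\<close>

lemma weighted_average_gt_if_outlier:
  fixes x1 x2 x3 p q N :: real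
  assumes "p \<ge> 1" "q \<ge> 1" "p + q < N" "x2 > 0" "x1 \<ge> 0" "x3 \<ge> 0"
    and "N * x2 \<le> x1 \<or> N * x2 \<le> x3"
  shows "x2 < x1 + p / (p + q) * (x3 - x1)"
proof -
  have pq: "p + q > 0" using assms by simp
  have "(p + q) * x2 < N * x2"
    using assms by (simp add: mult_strict_right_mono)
  also have "\<dots> \<le> q * x1 + p * x3"
  proof -
    have "x1 \<le> q * x1" "x3 \<le> p * x3"
      using assms by (simp_all add: mult_le_cancel_right1)
    moreover have "0 \<le> q * x1" "0 \<le> p * x3" using assms by simp_all
    ultimately show ?thesis using assms(7) by linarith
  qed
  also have "\<dots> = (p + q) * (x1 + p / (p + q) * (x3 - x1))"
    using pq by (simp add: field_simps)
  finally show ?thesis using pq by simp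
qed

lemma powr_ge_mult_powr_if_gap:
  fixes N b c :: real
  assumes "N \<ge> 1" "b + 1 \<le> c"
  shows "N * N powr b \<le> N powr c"
proof -
  have "N * N powr b = N powr (b + 1)" using assms by (simp add: powr_add)
  also have "\<dots> \<le> N powr c" using assms by (simp add: powr_mono)
  finally show ?thesis .
qed

theorem lemma7:
  fixes n :: nat and a1 b1 a2 b2 a3 b3 :: int
  assumes "(a1, b1) \<in> A n" and "(a2, b2) \<in> A n" and "(a3, b3) \<in> A n"
    and "a1 < a2" and "a2 < a3"
    and "(b1 < b2 \<and> b2 < b3) \<or> (b3 < b2 \<and> b2 < b1)"
  shows "snd (tau n (real_of_int a2, real_of_int b2))
           < line_at (tau n (real_of_int a1, real_of_int b1))
                     (tau n (real_of_int a3, real_of_int b3)) (real_of_int a2)"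
proof -
  note bounds = assms(1-3)[unfolded A_def, simplified]
  have "n \<ge> 1" using bounds assms(6) by (cases n) auto
  define N where "N = 28 * real n"
  have N: "N \<ge> 28" using \<open>n \<ge> 1\<close> by (simp add: N_def)
  have "N * N powr b2 \<le> N powr b1 \<or> N * N powr b2 \<le> N powr b3"
    using assms(6) N by (auto intro: powr_ge_mult_powr_if_gap)
  then have "N powr b2 < N powr b1 + (real_of_int a2 - a1) / ((real_of_int a2 - a1) + (a3 - a2))
                                * (N powr b3 - N powr b1)"
    using assms(4,5) bounds N
    by (intro weighted_average_gt_if_outlier) (auto simp: N_def)
  then show ?thesis by (simp add: tau_def line_at_def N_def)
qed

end
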